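(* If $\varphi$ is a closed block-labelled formula in disjunctive form, then $\mathrm{dec}_s(\mathrm{enc}(\varphi), \varphi, \emptyset) =_f \varphi$, for any bijective renaming $f$ of propositional variables such that $f(X^k) = [\varphi[X^k]]^k$ for every $X^k\in\mathrm{bv}(\varphi)$.
   Context: An LTS is a tuple $(\Sigma, A, \to, s_0)$ with state set $\Sigma$, label set $A$, transition relation $\to\,\subseteq \Sigma\times A\times\Sigma$ (written $s \xrightarrow{a} s'$) and initial state $s_0$. Block-labelled formulas in disjunctive form are generated by $\varphi ::= \mathbf{ff} \mid \varphi_1 \lor \varphi_2 \mid \langle a\rangle\varphi_0 \mid \mu X^k.\varphi_0 \mid \neg\varphi_0 \mid X^k$, where $a$ ranges over action labels, $X$ over propositional variables and $k\in\mathbb{N}$ is a block number attached to every variable occurrence. $\mathrm{fv}(\varphi)$ and $\mathrm{bv}(\varphi)$ denote the free and bound variables; $\varphi$ is closed if $\mathrm{fv}(\varphi)=\emptyset$. All bound variables are assumed to have distinct names, and for $X^k\in\mathrm{bv}(\varphi)$, $\varphi[X^k]$ denotes the unique sub-formula of $\varphi$ of the form $\mu X^k.\varphi_0$. Encoding: $\mathrm{enc}(\varphi)$ is the LTS whose states are the sub-formulas of $\varphi$, with initial state $\varphi$, where $\mathbf{ff}$ has no outgoing transitions and the transitions are exactly: $X^k \xrightarrow{\lor} \varphi[X^k]$; $\neg\varphi_0 \xrightarrow{\neg} \varphi_0$; $\langle a\rangle\varphi_0 \xrightarrow{\langle a\rangle}\varphi_0$; $\varphi_1\lor\varphi_2 \xrightarrow{\lor}\varphi_1$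 and $\varphi_1\lor\varphi_2\xrightarrow{\lor}\varphi_2$; $\mu X^k.\varphi_0 \xrightarrow{\mu^k}\varphi_0$. (Labels are the symbols $\lor$, $\neg$, $\langle a\rangle$, $\mu^k$.) Decoding: for an LTS $P$ with labels of the forms $\lor,\neg,\langle a\rangle,\mu^k$, a state $s$ and a set $E$ of states, $\mathrm{dec}_s(P,s,E) = \bigvee_{s\xrightarrow{\sigma}s' \in P}\mathrm{dec}_t(P, s\xrightarrow{\sigma}s', E)$ (a disjunction built with binary $\lor$ in some enumeration order of the outgoing transitions; the empty disjunction is $\mathbf{ff}$), where $\mathrm{dec}_t(P,s\xrightarrow{\lor}s',E)=\mathrm{dec}_s(P,s',E)$, $\mathrm{dec}_t(P,s\xrightarrow{\neg}s',E)=\neg\mathrm{dec}_s(P,s',E)$, $\mathrm{dec}_t(P,s\xrightarrow{\langle a\rangle}s',E)=\langle a\rangle\mathrm{dec}_s(P,s',E)$, and $\mathrm{dec}_t(P,s\xrightarrow{\mu^k}s',E)$ equals $[s]^k$ if $s\in E$ and $\mu [s]^k.\mathrm{dec}_s(P,s',E\cup\{s\})$ otherwise. Here $[s]^k$ denotes a propositional variable with block number $k$ uniquely determined by the pair $(s,k)$. Equality modulo renaming, commutativity and idempotence: for a bijection $f$ on propositional variables, $=_f$ is the smallest relation on formulas such that whenever $\varphi_i =_f \varphi_i'$ ($i\in\{0,1,2\}$): $\mathbf{ff}=_f\mathbf{ff}$, $\neg\varphi_0=_f\neg\varphi_0'$, $\langle a\rangle\varphi_0=_f\langle a\rangle\varphi_0'$,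 $\varphi_1\lor\varphi_2=_f\varphi_1'\lor\varphi_2'$, $X=_f f(X)$ and $\mu X.\varphi_0=_f\mu f(X).\varphi_0'$ for every variable $X$; $\varphi_1\lor\varphi_2 =_f \varphi_2'\lor\varphi_1'$; $\varphi_0\lor\varphi_0=_f\varphi_0'$ and $\varphi_0=_f\varphi_0'\lor\varphi_0'$. *)

theory Defs
  imports Main
begin

text \<open>Block-labelled formulas in disjunctive form. A propositional variable is a
  pair (name, block number); Var x k is the occurrence of variable x with block k.\<close>
datatype ('a, 'v) fml =
    FF
  | Or "('a, 'v) fml" "('a, 'v) fml"
  | Dia 'a "('a, 'v) fml"
  | Mu 'v nat "('a, 'v) fml"
  | Neg "('a, 'v) fml"
  | Var 'v nat

fun subs :: "('a, 'v) fml \<Rightarrow> ('a, 'v) fml set" where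
  "subs FF = {FF}"
| "subs (Or p q) = insert (Or p q) (subs p \<union> subs q)"
| "subs (Dia a p) = insert (Dia a p) (subs p)"
| "subs (Mu x k p) = insert (Mu x k p) (subs p)"
| "subs (Neg p) = insert (Neg p) (subs p)"
| "subs (Var x k) = {Var x k}"

fun fv :: "('a, 'v) fml \<Rightarrow> ('v \<times> nat) set" where
  "fv FF = {}"
| "fv (Or p q) = fv p \<union> fv q"
| "fv (Dia a p) = fv p"
| "fv (Mu x k p) = fv p - {(x, k)}"
| "fv (Neg p) = fv p"
| "fv (Var x k) = {(x, k)}"

text \<open>List of binder occurrences (bound variables); distinctness of this list
  expresses that all bound variables have distinct names.\<close>
fun mus :: "('a, 'v) fml \<Rightarrow> ('v \<times> nat) list" where
  "mus FF = []"
| "mus (Or p q) = mus p @ mus q"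
| "mus (Dia a p) = mus p"
| "mus (Mu x k p) = (x, k) # mus p"
| "mus (Neg p) = mus p"
| "mus (Var x k) = []"

definition bv :: "('a, 'v) fml \<Rightarrow> ('v \<times> nat) set" where
  "bv p = set (mus p)"

text \<open>phi[X^k]: the unique sub-formula of the form Mu X k phi0.\<close>
definition sub_mu :: "('a, 'v) fml \<Rightarrow> 'v \<Rightarrow> nat \<Rightarrow> ('a, 'v) fml" where
  "sub_mu p x k = (THE q. q \<in> subs p \<and> (\<exists>q0. q = Mu x k q0))"

datatype 'a lbl = LOr | LNeg | LDia 'a | LMu nat

record ('s, 'l) lts =
  states :: "'s set"
  trans :: "('s \<times> 'l \<times> 's) set"
  init :: 's

definition enc :: "('a, 'v) fml \<Rightarrow> (('a, 'v) fml, 'a lbl) lts" where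
  "enc p = \<lparr> states = subs p,
     trans = {(Var x k, LOr, sub_mu p x k) | x k. Var x k \<in> subs p}
           \<union> {(Neg q, LNeg, q) | q. Neg q \<in> subs p}
           \<union> {(Dia a q, LDia a, q) | a q. Dia a q \<in> subs p}
           \<union> {(Or q1 q2, LOr, q1) | q1 q2. Or q1 q2 \<in> subs p}
           \<union> {(Or q1 q2, LOr, q2) | q1 q2. Or q1 q2 \<in> subs p}
           \<union> {(Mu x k q, LMu k, q) | x k q. Mu x k q \<in> subs p},
     init = p \<rparr>"

fun disj :: "('a, 'v) fml list \<Rightarrow> ('a, 'v) fml" where
  "disj [] = FF"
| "disj [p] = p"
| "disj (p # ps) = Or p (disj ps)"

text \<open>Decoding, as a relation: decs br P s E psi holds iff psi is a result of
  dec_s(P,s,E) for some enumeration order of outgoing transitions. The variable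
  [s]^k is Var (br s k) k.\<close>
inductive decs :: "('s \<Rightarrow> nat \<Rightarrow> 'v) \<Rightarrow> ('s, 'a lbl, 'z) lts_scheme \<Rightarrow> 's \<Rightarrow> 's set \<Rightarrow> ('a, 'v) fml \<Rightarrow> bool"
and dect :: "('s \<Rightarrow> nat \<Rightarrow> 'v) \<Rightarrow> ('s, 'a lbl, 'z) lts_scheme \<Rightarrow> 's \<times> 'a lbl \<times> 's \<Rightarrow> 's set \<Rightarrow> ('a, 'v) fml \<Rightarrow> bool"
  for br P where
  decs_intro: "\<lbrakk> distinct ts; set ts = {t \<in> trans P. fst t = s};
      list_all2 (\<lambda>t q. dect br P t E q) ts qs \<rbrakk> \<Longrightarrow> decs br P s E (disj qs)"
| dect_or: "decs br P s' E q \<Longrightarrow> dect br P (s, LOr, s') E q"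
| dect_neg: "decs br P s' E q \<Longrightarrow> dect br P (s, LNeg, s') E (Neg q)"
| dect_dia: "decs br P s' E q \<Longrightarrow> dect br P (s, LDia a, s') E (Dia a q)"
| dect_mu_in: "s \<in> E \<Longrightarrow> dect br P (s, LMu k, s') E (Var (br s k) k)"
| dect_mu_out: "\<lbrakk> s \<notin> E; decs br P s' (insert s E) q \<rbrakk>
      \<Longrightarrow> dect br P (s, LMu k, s') E (Mu (br s k) k q)"

text \<open>Equality modulo renaming f, commutativity and idempotence.\<close>
inductive eqf :: "('v \<times> nat \<Rightarrow> 'v \<times> nat) \<Rightarrow> ('a, 'v) fml \<Rightarrow> ('a, 'v) fml \<Rightarrow> bool"
  for f where
  eqf_ff: "eqf f FF FF"
| eqf_neg: "eqf f p p' \<Longrightarrow> eqf f (Neg p) (Neg p')"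
| eqf_dia: "eqf f p p' \<Longrightarrow> eqf f (Dia a p) (Dia a p')"
| eqf_or: "\<lbrakk> eqf f p1 p1'; eqf f p2 p2' \<rbrakk> \<Longrightarrow> eqf f (Or p1 p2) (Or p1' p2')"
| eqf_var: "f (x, k) = (y, m) \<Longrightarrow> eqf f (Var x k) (Var y m)"
| eqf_mu: "\<lbrakk> f (x, k) = (y, m); eqf f p p' \<rbrakk> \<Longrightarrow> eqf f (Mu x k p) (Mu y m p')"
| eqf_comm: "\<lbrakk> eqf f p1 p1'; eqf f p2 p2' \<rbrakk> \<Longrightarrow> eqf f (Or p1 p2) (Or p2' p1')"
| eqf_idem_l: "eqf f p p' \<Longrightarrow> eqf f (Or p p) p'"
| eqf_idem_r: "eqf f p p' \<Longrightarrow> eqf f p (Or p' p')"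

end

theory Submission
  imports Defs
begin

text \<open>Induct over the sub-formulas q of \<phi>, decoding q relative to a set E of visited
  states that contains the binder of every free variable of q and no binder inside q. Every
  state of enc \<phi> has one outgoing transition, except FF (none) and disjunctions (two), so
  the enumeration order only matters at a disjunction, where it is absorbed by commutativity
  (or by idempotence when both disjuncts coincide). A \<mu>-state is not yet in E and decodes to a
  binder [\<mu>X^k.\<phi>0]^k = f(X^k); a variable X^k steps to its binder \<phi>[X^k], which is already
  in E and therefore decodes to the variable f(X^k).\<close>

lemma subs_refl: "p \<in> subs p"
  by (cases p) auto

lemma subs_trans: "q \<in> subs p \<Longrightarrow> subs q \<subseteq> subs p"
  by (induction p) auto

lemma size_le_if_subs: "q \<in> subs p \<Longrightarrow> size q \<le> size p"
  by (induction p) auto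

lemma mus_if_Mu_in_subs: "Mu x k r \<in> subs p \<Longrightarrow> (x, k) \<in> set (mus p)"
  by (induction p) auto

lemma Mu_in_subs_unique:
  "\<lbrakk> Mu x k r \<in> subs p; Mu x k r' \<in> subs p; distinct (mus p) \<rbrakk> \<Longrightarrow> r = r'"
  by (induction p) (auto dest: mus_if_Mu_in_subs)

lemma Var_in_subs_free_or_bound:
  "Var x k \<in> subs p \<Longrightarrow> (x, k) \<in> fv p \<or> (\<exists>r. Mu x k r \<in> subs p)"
  by (induction p) auto

lemma sub_mu_eq: "\<lbrakk> Mu x k r \<in> subs p; distinct (mus p) \<rbrakk> \<Longrightarrow> sub_mu p x k = Mu x k r"
  unfolding sub_mu_def by (rule the_equality) (auto dest: Mu_in_subs_unique)

lemma distinct_list_of_singleton: "\<lbrakk> distinct ts; set ts = {t} \<rbrakk> \<Longrightarrow> ts = [t]"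
proof -
  assume "distinct ts" "set ts = {t}"
  then have "length ts = 1" using distinct_card by fastforce
  with \<open>set ts = {t}\<close> show "ts = [t]" by (cases ts) auto
qed

lemma distinct_list_of_doubleton:
  "\<lbrakk> distinct ts; set ts = {t1, t2}; t1 \<noteq> t2 \<rbrakk> \<Longrightarrow> ts = [t1, t2] \<or> ts = [t2, t1]"
proof -
  assume "distinct ts" "set ts = {t1, t2}" "t1 \<noteq> t2"
  then have "length ts = 2" using distinct_card by fastforce
  then obtain u v where "ts = [u, v]" by (cases ts; cases "tl ts") auto
  with \<open>distinct ts\<close> \<open>set ts = {t1, t2}\<close> show ?thesis by auto
qed

inductive_cases decsE: "decs br P s E \<psi>"

lemma decs_no_trans:
  assumes "{t \<in> trans P. fst t = s} = {}"
  shows "decs br P s E \<psi> \<longleftrightarrow> \<psi> = FF"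
proof
  assume "decs br P s E \<psi>"
  then show "\<psi> = FF" by (rule decsE) (use assms in auto)
next
  assume "\<psi> = FF"
  then show "decs br P s E \<psi>"
    using decs_intro[of "[]" P s br E "[]"] assms by simp
qed

lemma decs_one_trans:
  assumes "{t \<in> trans P. fst t = s} = {t}"
  shows "decs br P s E \<psi> \<longleftrightarrow> dect br P t E \<psi>"
proof
  assume "decs br P s E \<psi>"
  then obtain ts qs where \<psi>: "\<psi> = disj qs" and ts: "distinct ts" "set ts = {t}"
    and qs: "list_all2 (\<lambda>t q. dect br P t E q) ts qs"
    by (rule decsE) (use assms in blast)
  from ts have "ts = [t]" by (rule distinct_list_of_singleton)
  with qs obtain q where "qs = [q]" "dect br P t E q" by (auto simp: list_all2_Cons1)
  with \<psi> show "dect br P t E \<psi>" by simp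
next
  assume "dect br P t E \<psi>"
  then show "decs br P s E \<psi>"
    using decs_intro[of "[t]" P s br E "[\<psi>]"] assms by simp
qed

lemma decs_two_trans:
  assumes "{t \<in> trans P. fst t = s} = {t1, t2}" and "t1 \<noteq> t2"
  shows "decs br P s E \<psi> \<longleftrightarrow>
    (\<exists>q1 q2. dect br P t1 E q1 \<and> dect br P t2 E q2 \<and> (\<psi> = Or q1 q2 \<or> \<psi> = Or q2 q1))"
proof
  assume "decs br P s E \<psi>"
  then obtain ts qs where \<psi>: "\<psi> = disj qs" and ts: "distinct ts" "set ts = {t1, t2}"
    and qs: "list_all2 (\<lambda>t q. dect br P t E q) ts qs"
    by (rule decsE) (use assms(1) in blast)
  from ts assms(2) have "ts = [t1, t2] \<or> ts = [t2, t1]" by (rule distinct_list_of_doubleton)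
  with qs \<psi> show "\<exists>q1 q2. dect br P t1 E q1 \<and> dect br P t2 E q2 \<and> (\<psi> = Or q1 q2 \<or> \<psi> = Or q2 q1)"
    by (auto simp: list_all2_Cons1) blast+
next
  assume "\<exists>q1 q2. dect br P t1 E q1 \<and> dect br P t2 E q2 \<and> (\<psi> = Or q1 q2 \<or> \<psi> = Or q2 q1)"
  then obtain q1 q2 where q: "dect br P t1 E q1" "dect br P t2 E q2"
    and \<psi>: "\<psi> = Or q1 q2 \<or> \<psi> = Or q2 q1"
    by blast
  from \<psi> show "decs br P s E \<psi>"
  proof
    assume "\<psi> = Or q1 q2"
    then show ?thesis using decs_intro[of "[t1, t2]" P s br E "[q1, q2]"] q assms by simp
  next
    assume "\<psi> = Or q2 q1"
    then show ?thesis using decs_intro[of "[t2, t1]" P s br E "[q2, q1]"] q assms by auto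
  qed
qed

inductive_simps dect_LOr: "dect br P (s, LOr, s') E \<psi>"
inductive_simps dect_LNeg: "dect br P (s, LNeg, s') E \<psi>"
inductive_simps dect_LDia: "dect br P (s, LDia a, s') E \<psi>"
inductive_simps dect_LMu: "dect br P (s, LMu k, s') E \<psi>"

lemma trans_enc_from:
  "q \<in> subs p \<Longrightarrow> {t \<in> trans (enc p). fst t = q} = (case q of
      FF \<Rightarrow> {}
    | Or q1 q2 \<Rightarrow> {(q, LOr, q1), (q, LOr, q2)}
    | Dia a r \<Rightarrow> {(q, LDia a, r)}
    | Mu x k r \<Rightarrow> {(q, LMu k, r)}
    | Neg r \<Rightarrow> {(q, LNeg, r)}
    | Var x k \<Rightarrow> {(q, LOr, sub_mu p x k)})"
  by (cases q) (auto simp: enc_def)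

lemma decs_enc_subformula:
  fixes \<phi> :: "('a, 'v) fml"
  assumes closed: "fv \<phi> = {}" and distinct_bv: "distinct (mus \<phi>)"
    and f_bv: "\<And>x k. (x, k) \<in> bv \<phi> \<Longrightarrow> f (x, k) = (br (sub_mu \<phi> x k) k, k)"
    and "q \<in> subs \<phi>"
    and "\<forall>(x, k)\<in>fv q. sub_mu \<phi> x k \<in> E"
    and "\<forall>x k r. Mu x k r \<in> subs q \<longrightarrow> Mu x k r \<notin> E"
  shows "(\<exists>\<psi>. decs br (enc \<phi>) q E \<psi>) \<and> (\<forall>\<psi>. decs br (enc \<phi>) q E \<psi> \<longrightarrow> eqf f q \<psi>)"
  using assms(4-)
proof (induction q arbitrary: E)
  case FF
  then show ?case
    by (auto simp: decs_no_trans trans_enc_from intro: eqf_ff)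
next
  case (Or a b)
  have "a \<in> subs \<phi>" "b \<in> subs \<phi>"
    using subs_trans[OF Or.prems(1)] subs_refl by auto
  then have IH: "(\<exists>\<psi>. decs br (enc \<phi>) a E \<psi>) \<and> (\<forall>\<psi>. decs br (enc \<phi>) a E \<psi> \<longrightarrow> eqf f a \<psi>)"
    "(\<exists>\<psi>. decs br (enc \<phi>) b E \<psi>) \<and> (\<forall>\<psi>. decs br (enc \<phi>) b E \<psi> \<longrightarrow> eqf f b \<psi>)"
    by (intro Or.IH; use Or.prems in auto)+
  show ?case
  proof (cases "a = b")
    case True
    then have "{t \<in> trans (enc \<phi>). fst t = Or a b} = {(Or a b, LOr, a)}"
      using trans_enc_from[OF Or.prems(1)] by simp
    with IH True show ?thesis
      by (auto simp: decs_one_trans dect_LOr intro: eqf_idem_l)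
  next
    case False
    then have "decs br (enc \<phi>) (Or a b) E \<psi> \<longleftrightarrow> (\<exists>q1 q2. decs br (enc \<phi>) a E q1 \<and>
        decs br (enc \<phi>) b E q2 \<and> (\<psi> = Or q1 q2 \<or> \<psi> = Or q2 q1))" for \<psi>
      using trans_enc_from[OF Or.prems(1)] by (simp add: decs_two_trans dect_LOr)
    with IH show ?thesis
      by (auto intro: eqf_or eqf_comm)
  qed
next
  case (Dia a r)
  have "r \<in> subs \<phi>"
    using subs_trans[OF Dia.prems(1)] subs_refl by auto
  with Dia.prems Dia.IH show ?case
    using trans_enc_from[OF Dia.prems(1)] by (auto simp: decs_one_trans dect_LDia intro: eqf_dia)
next
  case (Neg r)
  have "r \<in> subs \<phi>"
    using subs_trans[OF Neg.prems(1)] subs_refl by auto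
  with Neg.prems Neg.IH show ?case
    using trans_enc_from[OF Neg.prems(1)] by (auto simp: decs_one_trans dect_LNeg intro: eqf_neg)
next
  case (Mu x k r)
  let ?M = "Mu x k r"
  have "r \<in> subs \<phi>"
    using subs_trans[OF Mu.prems(1)] subs_refl by auto
  have "sub_mu \<phi> x k = ?M"
    using Mu.prems(1) distinct_bv by (rule sub_mu_eq)
  then have f_x: "f (x, k) = (br ?M k, k)"
    using f_bv mus_if_Mu_in_subs[OF Mu.prems(1)] by (simp add: bv_def)
  have "?M \<notin> E"
    using Mu.prems(3) subs_refl by blast
  have "\<forall>(y, m)\<in>fv r. sub_mu \<phi> y m \<in> insert ?M E"
    using Mu.prems(2) \<open>sub_mu \<phi> x k = ?M\<close> by fastforce
  moreover have "\<forall>y m s. Mu y m s \<in> subs r \<longrightarrow> Mu y m s \<notin> insert ?M E"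
    using Mu.prems(3) size_le_if_subs by fastforce
  ultimately have IH: "(\<exists>\<psi>. decs br (enc \<phi>) r (insert ?M E) \<psi>) \<and>
    (\<forall>\<psi>. decs br (enc \<phi>) r (insert ?M E) \<psi> \<longrightarrow> eqf f r \<psi>)"
    by (rule Mu.IH[OF \<open>r \<in> subs \<phi>\<close>])
  with \<open>?M \<notin> E\<close> f_x show ?case
    using trans_enc_from[OF Mu.prems(1)] by (auto simp: decs_one_trans dect_LMu intro: eqf_mu)
next
  case (Var x k)
  obtain r where "Mu x k r \<in> subs \<phi>"
    using Var_in_subs_free_or_bound[OF Var.prems(1)] closed by auto
  let ?M = "Mu x k r"
  have "sub_mu \<phi> x k = ?M"
    using \<open>?M \<in> subs \<phi>\<close> distinct_bv by (rule sub_mu_eq)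
  then have f_x: "f (x, k) = (br ?M k, k)"
    using f_bv mus_if_Mu_in_subs[OF \<open>?M \<in> subs \<phi>\<close>] by (simp add: bv_def)
  have "?M \<in> E"
    using Var.prems(2) \<open>sub_mu \<phi> x k = ?M\<close> by simp
  then have "decs br (enc \<phi>) ?M E \<psi> \<longleftrightarrow> \<psi> = Var (br ?M k) k" for \<psi>
    using trans_enc_from[OF \<open>?M \<in> subs \<phi>\<close>] by (simp add: decs_one_trans dect_LMu)
  with f_x \<open>sub_mu \<phi> x k = ?M\<close> show ?case
    using trans_enc_from[OF Var.prems(1)] by (auto simp: decs_one_trans dect_LOr intro: eqf_var)
qed

theorem proposition2:
  fixes \<phi> :: "('a, 'v) fml"
    and br :: "('a, 'v) fml \<Rightarrow> nat \<Rightarrow> 'v"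
    and f :: "'v \<times> nat \<Rightarrow> 'v \<times> nat"
  assumes br_inj: "\<And>k. inj (\<lambda>s. br s k)"
    and closed: "fv \<phi> = {}"
    and distinct_bv: "distinct (mus \<phi>)"
    and f_bij: "bij f"
    and f_bv: "\<And>x k. (x, k) \<in> bv \<phi> \<Longrightarrow> f (x, k) = (br (sub_mu \<phi> x k) k, k)"
  shows "(\<exists>\<psi>. decs br (enc \<phi>) \<phi> {} \<psi>) \<and>
         (\<forall>\<psi>. decs br (enc \<phi>) \<phi> {} \<psi> \<longrightarrow> eqf f \<phi> \<psi>)"
  by (rule decs_enc_subformula[OF closed distinct_bv f_bv subs_refl]) (simp_all add: closed)

end
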